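(* Let $d\ge2$, $n\ge1$, $d\le t\le dn$, and let $\gamma$ be a positive conductivity on the lattice graph below. The following are equivalent: (i) the only $\mathbf u\in\mathbb R^{L_t^{\mathcal S}\cup J_{t-1}^{\mathcal S}}$ with $\sum_{q\in\mathcal N(p)}\gamma_{pq}(\mathbf u_q-\mathbf u_p)=0$ for all $p\in L_{t-1}^{\mathcal S}$, $\mathbf u=0$ on $J_{t-1}^{\mathcal S}$, and $\gamma_{bq_b}(\mathbf u_{q_b}-\mathbf u_b)=0$ for all $b\in J_{t-1}^{\mathcal S}$, is $\mathbf u=0$; (ii) the vectors $\{\mathbf v_p|_{L_{t-1}^{\mathcal S}\cup J_{t-1}^{\mathcal S}}:p\in L_t^{\mathcal S}\}$ are linearly independent; (iii) the operator $T_2'^{(t)}$ is injective.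
   Context: Lattice: $D=\{x\in\mathbb Z^d:1\le x_i\le n\ \forall i\}$, $\partial D=\{p\in\mathbb Z^d:\min_{q\in D}\|q-p\|_{\ell^1}=1\}$; $E$ = unordered pairs $pq\subseteq D\cup\partial D$ with $\|p-q\|_{\ell^1}=1$, not both in $\partial D$; $\mathcal N(p)=\{q:pq\in E\}$; each $b\in\partial D$ has a unique neighbour $q_b\in D$. Conductivity $\gamma:E\to(0,\infty)$, symmetric. For $p\in D\cup\partial D$, $\mathbf v_p\in\mathbb R^{D\cup\partial D}$ has $(\mathbf v_p)_q=\gamma_{pq}$ for $q\in\mathcal N(p)$, $(\mathbf v_p)_p=-\sum_{r\in\mathcal N(p)}\gamma_{pr}$, and $0$ elsewhere. With $s(x)=\sum_ix_i$: $L_t=\{x\in D:s(x)=t\}$, $L_t^{\mathcal S}=\{x\in D:s(x)\le t\}$, $K_t^+=\{x\in\partial D:s(x)=t,\max_ix_i=n+1\}$, $K_t^-=\{x\in\partial D:s(x)=t,\min_ix_i=0\}$, $K_t^{\mathcal S\pm}=\bigcup_{\ell\le t}K_\ell^\pm$, $J_t^{\mathcal S}=K_t^{\mathcal S-}\cup K_{t+1}^{\mathcal S+}$. $T_2'^{(t)}:\mathbb R^{L_t}\to\mathbb R^{J_{t-1}^{\mathcal S}}$: for $\mathbf x\in\mathbb R^{L_t}$ let $\mathbf u$ be the unique function on $L_t^{\mathcal S}\cup J_{t-1}^{\mathcal S}$ with $\mathbf u=\mathbf x$ on $L_t$, $\mathbf u=0$ on $J_{t-1}^{\mathcal S}$,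 and $\sum_{q\in\mathcal N(p)}\gamma_{pq}(\mathbf u_q-\mathbf u_p)=0$ for $p\in L_{t-1}^{\mathcal S}$; then $(T_2'^{(t)}\mathbf x)_b=\gamma_{bq_b}(\mathbf u_{q_b}-\mathbf u_b)$ for $b\in J_{t-1}^{\mathcal S}$. *)

theory Defs
  imports Complex_Main
begin

text \<open>Points of Z^d are integer lists of length d; coordinate i of the paper is index i-1.\<close>

definition dist1 :: "int list \<Rightarrow> int list \<Rightarrow> int" where
  "dist1 x y = (\<Sum>i<length x. \<bar>x ! i - y ! i\<bar>)"

definition Dom :: "nat \<Rightarrow> nat \<Rightarrow> int list set" where
  "Dom d n = {x. length x = d \<and> (\<forall>i<d. 1 \<le> x ! i \<and> x ! i \<le> int n)}"

definition Bd :: "nat \<Rightarrow> nat \<Rightarrow> int list set" where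
  "Bd d n = {p. length p = d \<and> (\<exists>q\<in>Dom d n. dist1 q p = 1) \<and> (\<forall>q\<in>Dom d n. 1 \<le> dist1 q p)}"

definition edge :: "nat \<Rightarrow> nat \<Rightarrow> int list \<Rightarrow> int list \<Rightarrow> bool" where
  "edge d n p q \<longleftrightarrow> p \<in> Dom d n \<union> Bd d n \<and> q \<in> Dom d n \<union> Bd d n \<and> dist1 p q = 1
      \<and> \<not> (p \<in> Bd d n \<and> q \<in> Bd d n)"

definition nbrs :: "nat \<Rightarrow> nat \<Rightarrow> int list \<Rightarrow> int list set" where
  "nbrs d n p = {q. edge d n p q}"

definition vvec :: "nat \<Rightarrow> nat \<Rightarrow> (int list \<Rightarrow> int list \<Rightarrow> real) \<Rightarrow> int list \<Rightarrow> int list \<Rightarrow> real" where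
  "vvec d n \<gamma> p q = (if q \<in> nbrs d n p then \<gamma> p q
     else if q = p then - (\<Sum>r\<in>nbrs d n p. \<gamma> p r) else 0)"

definition qb :: "nat \<Rightarrow> nat \<Rightarrow> int list \<Rightarrow> int list" where
  "qb d n b = (THE q. q \<in> Dom d n \<and> edge d n b q)"

definition ssum :: "int list \<Rightarrow> int" where "ssum x = sum_list x"

definition Lev :: "nat \<Rightarrow> nat \<Rightarrow> int \<Rightarrow> int list set" where
  "Lev d n t = {x \<in> Dom d n. ssum x = t}"
definition LevS :: "nat \<Rightarrow> nat \<Rightarrow> int \<Rightarrow> int list set" where
  "LevS d n t = {x \<in> Dom d n. ssum x \<le> t}"
definition Kplus :: "nat \<Rightarrow> nat \<Rightarrow> int \<Rightarrow> int list set" where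
  "Kplus d n t = {x \<in> Bd d n. ssum x = t \<and> Max (set x) = int n + 1}"
definition Kminus :: "nat \<Rightarrow> nat \<Rightarrow> int \<Rightarrow> int list set" where
  "Kminus d n t = {x \<in> Bd d n. ssum x = t \<and> Min (set x) = 0}"
definition KSplus :: "nat \<Rightarrow> nat \<Rightarrow> int \<Rightarrow> int list set" where
  "KSplus d n t = (\<Union>l\<in>{..t}. Kplus d n l)"
definition KSminus :: "nat \<Rightarrow> nat \<Rightarrow> int \<Rightarrow> int list set" where
  "KSminus d n t = (\<Union>l\<in>{..t}. Kminus d n l)"
definition JS :: "nat \<Rightarrow> nat \<Rightarrow> int \<Rightarrow> int list set" where
  "JS d n t = KSminus d n t \<union> KSplus d n (t + 1)"

definition kirchhoff :: "nat \<Rightarrow> nat \<Rightarrow> (int list \<Rightarrow> int list \<Rightarrow> real) \<Rightarrow> (int list \<Rightarrow> real) \<Rightarrow> int list \<Rightarrow> bool" where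
  "kirchhoff d n \<gamma> u p \<longleftrightarrow> (\<Sum>q\<in>nbrs d n p. \<gamma> p q * (u q - u p)) = 0"

text \<open>Functions on a finite set A are represented as functions vanishing outside A.\<close>
definition supp_in :: "int list set \<Rightarrow> (int list \<Rightarrow> real) \<Rightarrow> bool" where
  "supp_in A u \<longleftrightarrow> (\<forall>q. q \<notin> A \<longrightarrow> u q = 0)"

definition lin_indep_restr :: "int list set \<Rightarrow> (int list \<Rightarrow> int list \<Rightarrow> real) \<Rightarrow> int list set \<Rightarrow> bool" where
  "lin_indep_restr I w A \<longleftrightarrow>
     (\<forall>c. (\<forall>q\<in>A. (\<Sum>p\<in>I. c p * w p q) = 0) \<longrightarrow> (\<forall>p\<in>I. c p = 0))"

definition T2' :: "nat \<Rightarrow> nat \<Rightarrow> (int list \<Rightarrow> int list \<Rightarrow> real) \<Rightarrow> int \<Rightarrow> (int list \<Rightarrow> real) \<Rightarrow> int list \<Rightarrow> real" where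
  "T2' d n \<gamma> t x =
    (let u = (THE u. supp_in (LevS d n t \<union> JS d n (t - 1)) u
                  \<and> (\<forall>q\<in>Lev d n t. u q = x q)
                  \<and> (\<forall>b\<in>JS d n (t - 1). u b = 0)
                  \<and> (\<forall>p\<in>LevS d n (t - 1). kirchhoff d n \<gamma> u p))
     in (\<lambda>b. if b \<in> JS d n (t - 1) then \<gamma> b (qb d n b) * (u (qb d n b) - u b) else 0))"

end

theory Submission
  imports Defs "HOL-Library.Function_Algebras" "HOL-Library.Indicator_Function"
begin

(*
  Write Delta for the weighted graph Laplacian, (Delta u)(p) = sum of gamma_pq (u_q - u_p) over the
  neighbours q of p. Each of the three conditions says that the only function supported in
  L_t^S whose Laplacian vanishes on L_{t-1}^S and on J_{t-1}^S is zero. For (i) this is a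
  restatement, since at a boundary point b the Laplacian is the flux gamma_{b q_b} (u_{q_b} - u_b).
  For (ii), pairing coefficients with the vectors v_p gives their Laplacian, by the symmetry of
  gamma. For (iii), T_2' sends x to the Laplacian on J_{t-1}^S of the harmonic extension of x
  from L_t into L_{t-1}^S. This extension exists and is unique by a maximum principle for
  functions harmonic on a finite part of D and vanishing elsewhere; existence then follows from
  uniqueness by finite-dimensional linear algebra.
*)

section \<open>Injective linear maps of finitely supported functions\<close>

lemma sum_fun_apply: "(sum f A) x = (\<Sum>a\<in>A. f a x)"
  for f :: "'a \<Rightarrow> 'b \<Rightarrow> 'c::comm_monoid_add"
  by (induction A rule: infinite_finite_induct) auto

lemma (in vector_space) linear_inj_on_span_imp_surj_on_span:
  assumes "finite B" and "Vector_Spaces.linear scale scale f"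
    and "f ` span B \<subseteq> span B" and "inj_on f (span B)"
  shows "f ` span B = span B"
proof (rule equalityI)
  show "f ` span B \<subseteq> span B"
    by (rule assms(3))
  interpret f: Vector_Spaces.linear scale scale f by fact
  obtain C where C: "C \<subseteq> span B" "independent C" "span B \<subseteq> span C"
    by (rule maximal_independent_subset)
  have fin: "finite C"
    using independent_span_bound[OF \<open>finite B\<close> C(2,1)] by blast
  have span_C: "span C = span B"
    using C(1,3) span_minimal[OF C(1) subspace_span] by blast
  have inj: "inj_on f (span C)"
    using assms(4) span_C by simp
  have indep: "independent (f ` C)"
    by (rule f.independent_injective_image[OF C(2) inj])
  have card: "card (f ` C) = card C"
    using card_image inj_on_subset[OF inj span_superset] by blast
  have sub: "f ` C \<subseteq> span C"
    using assms(3) span_superset span_C by blast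
  have "span C \<subseteq> span (f ` C)"
  proof
    fix y assume "y \<in> span C"
    show "y \<in> span (f ` C)"
    proof (rule ccontr)
      assume y: "y \<notin> span (f ` C)"
      have "card (insert y (f ` C)) \<le> card C"
        using independent_span_bound[OF fin independent_insertI[OF y indep]] sub \<open>y \<in> span C\<close>
        by blast
      moreover have "y \<notin> f ` C"
        using y span_superset by blast
      ultimately show False
        using card fin by simp
    qed
  qed
  then show "span B \<subseteq> f ` span B"
    using f.span_image span_C by simp
qed

lemma span_point_indicators:
  fixes I :: "'a set"
  assumes "finite I"
  shows "module.span (\<lambda>c f x. c * f x) ((\<lambda>p. indicator {p}) ` I)
    = {w :: 'a \<Rightarrow> real. \<forall>q. q \<notin> I \<longrightarrow> w q = 0}" (is "?span = ?V")
proof -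
  interpret V: vector_space "\<lambda>c f x. c * f x :: real"
    by unfold_locales (auto simp: fun_eq_iff algebra_simps)
  have "V.subspace ?V"
    unfolding V.subspace_def by auto
  then have "?span \<subseteq> ?V"
    by (rule V.span_minimal[rotated]) (auto simp: indicator_def)
  moreover have "w \<in> ?span" if "w \<in> ?V" for w
  proof -
    have "w = (\<Sum>p\<in>I. (\<lambda>x. w p * indicator {p} x))"
      using that \<open>finite I\<close> by (auto simp: fun_eq_iff sum_fun_apply indicator_def Int_insert_right)
    also have "\<dots> \<in> ?span"
      by (intro V.span_sum V.span_scale V.span_base) auto
    finally show ?thesis .
  qed
  ultimately show ?thesis
    by blast
qed

lemma inj_on_finite_support_imp_surj:
  fixes F :: "(int list \<Rightarrow> real) \<Rightarrow> int list \<Rightarrow> real"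
  assumes "finite I"
    and add: "\<And>a b. F (a + b) = F a + F b"
    and scale: "\<And>c a. F (\<lambda>x. c * a x) = (\<lambda>x. c * F a x)"
    and into: "\<And>w. supp_in I w \<Longrightarrow> supp_in I (F w)"
    and inj: "\<And>w. supp_in I w \<Longrightarrow> F w = 0 \<Longrightarrow> w = 0"
    and "supp_in I y"
  shows "\<exists>w. supp_in I w \<and> F w = y"
proof -
  interpret V: vector_space "\<lambda>c f x. c * f x :: real"
    by unfold_locales (auto simp: fun_eq_iff algebra_simps)
  let ?B = "(\<lambda>p. indicator {p}) ` I"
  have span: "V.span ?B = {w. supp_in I w}"
    using span_point_indicators[OF \<open>finite I\<close>] by (simp add: supp_in_def)
  have lin: "Vector_Spaces.linear (\<lambda>c f x. c * f x) (\<lambda>c f x. c * f x) F"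
    by unfold_locales (simp_all add: add scale fun_eq_iff algebra_simps)
  then interpret F: Vector_Spaces.linear "\<lambda>c f x. c * f x" "\<lambda>c f x. c * f x" F .
  have "F ` V.span ?B \<subseteq> V.span ?B"
    using into unfolding span by auto
  moreover have "inj_on F (V.span ?B)"
    using F.inj_on_iff_eq_0[OF V.subspace_span, of ?B] inj unfolding span by (auto simp: zero_fun_def)
  ultimately have "F ` V.span ?B = V.span ?B"
    by (rule V.linear_inj_on_span_imp_surj_on_span[OF finite_imageI[OF \<open>finite I\<close>] lin])
  then show ?thesis
    using \<open>supp_in I y\<close> unfolding span by force
qed

section \<open>Geometry of the lattice domain\<close>

lemma dist1_sym: "length x = length y \<Longrightarrow> dist1 x y = dist1 y x"
  unfolding dist1_def by (simp add: abs_minus_commute)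

lemma dist1_self [simp]: "dist1 x x = 0"
  unfolding dist1_def by simp

lemma abs_nth_diff_le_dist1: "i < length x \<Longrightarrow> \<bar>x ! i - y ! i\<bar> \<le> dist1 x y"
  unfolding dist1_def by (rule member_le_sum) auto

lemma nth_eq_if_dist1_eq_1:
  assumes "dist1 x y = 1" and "k < length x" and "\<bar>x ! k - y ! k\<bar> = 1"
    and "i < length x" and "i \<noteq> k"
  shows "x ! i = y ! i"
proof -
  have "dist1 x y = \<bar>x ! k - y ! k\<bar> + (\<Sum>j\<in>{..<length x} - {k}. \<bar>x ! j - y ! j\<bar>)"
    unfolding dist1_def using \<open>k < length x\<close> by (subst sum.remove[of _ k]) auto
  then have "(\<Sum>j\<in>{..<length x} - {k}. \<bar>x ! j - y ! j\<bar>) = 0"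
    using assms(1,3) by simp
  then show ?thesis
    using assms(4,5) by (subst (asm) sum_nonneg_eq_0_iff) auto
qed

lemma Dom_length: "p \<in> Dom d n \<Longrightarrow> length p = d"
  by (simp add: Dom_def)

lemma Bd_length: "p \<in> Bd d n \<Longrightarrow> length p = d"
  by (simp add: Bd_def)

lemma dist1_ge_1_if_notin_Dom:
  assumes "q \<in> Dom d n" and "length p = d" and "p \<notin> Dom d n"
  shows "1 \<le> dist1 q p"
proof -
  obtain k where k: "k < d" "\<not> (1 \<le> p ! k \<and> p ! k \<le> int n)"
    using assms(2,3) by (auto simp: Dom_def)
  then have "1 \<le> \<bar>q ! k - p ! k\<bar>"
    using assms(1) by (auto simp: Dom_def)
  also have "\<dots> \<le> dist1 q p"
    using k(1) assms(1) by (intro abs_nth_diff_le_dist1) (simp add: Dom_length)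
  finally show ?thesis .
qed

lemma Bd_eq: "Bd d n = {p. length p = d \<and> p \<notin> Dom d n \<and> (\<exists>q\<in>Dom d n. dist1 q p = 1)}"
  unfolding Bd_def using dist1_ge_1_if_notin_Dom by fastforce

lemma Dom_Bd_disjoint: "Dom d n \<inter> Bd d n = {}"
  by (auto simp: Bd_eq)

lemma finite_Dom_Un_Bd: "finite (Dom d n \<union> Bd d n)"
proof -
  have "Dom d n \<union> Bd d n \<subseteq> {xs. set xs \<subseteq> {0..int n + 1} \<and> length xs = d}"
  proof
    fix p assume p: "p \<in> Dom d n \<union> Bd d n"
    then obtain q where q: "q \<in> Dom d n" "dist1 q p \<le> 1"
      by (auto simp: Bd_def)
    have len: "length p = d"
      using p by (auto simp: Dom_length Bd_length)
    have "p ! i \<in> {0..int n + 1}" if "i < d" for i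
      using that q abs_nth_diff_le_dist1[of i q p] by (fastforce simp: Dom_def)
    then show "p \<in> {xs. set xs \<subseteq> {0..int n + 1} \<and> length xs = d}"
      using len by (auto simp: in_set_conv_nth)
  qed
  then show ?thesis
    by (rule finite_subset) (simp add: finite_lists_length_eq)
qed

lemma edge_sym: "edge d n p q \<Longrightarrow> edge d n q p"
  unfolding edge_def by (auto simp: dist1_sym Dom_length Bd_length)

lemma nbrs_sym: "q \<in> nbrs d n p \<longleftrightarrow> p \<in> nbrs d n q"
  by (auto simp: nbrs_def intro: edge_sym)

lemma self_notin_nbrs: "p \<notin> nbrs d n p"
  by (simp add: nbrs_def edge_def)

lemma nbrs_subset: "nbrs d n p \<subseteq> Dom d n \<union> Bd d n"
  by (auto simp: nbrs_def edge_def)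

lemma finite_nbrs: "finite (nbrs d n p)"
  using finite_subset[OF nbrs_subset finite_Dom_Un_Bd] .

lemma in_nbrs_if_dist1_eq_1:
  assumes "p \<in> Dom d n" and "length q = d" and "dist1 p q = 1"
  shows "q \<in> nbrs d n p"
  using assms Dom_Bd_disjoint unfolding nbrs_def edge_def Bd_eq by blast

text \<open>Raising the first coordinate of a point of D gives a point of D or of the face
  x_1 = n + 1 of the boundary.\<close>

lemma ex_nbr_ssum_Suc:
  assumes "d \<ge> 1" and "p \<in> Dom d n"
  shows "\<exists>q\<in>nbrs d n p. ssum q = ssum p + 1"
proof -
  obtain a ps where p: "p = a # ps"
    using assms by (cases p) (auto simp: Dom_def)
  have "dist1 p ((a + 1) # ps) = 1"
    unfolding p dist1_def by (simp add: sum.lessThan_Suc_shift del: sum.lessThan_Suc)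
  moreover have "length ((a + 1) # ps) = d"
    using Dom_length[OF assms(2)] by (simp add: p)
  ultimately have "(a + 1) # ps \<in> nbrs d n p"
    using in_nbrs_if_dist1_eq_1[OF assms(2)] by blast
  moreover have "ssum ((a + 1) # ps) = ssum p + 1"
    by (simp add: p ssum_def)
  ultimately show ?thesis
    by blast
qed

lemma Bd_nbr_unique:
  assumes b: "b \<in> Bd d n"
    and p: "p \<in> Dom d n" "dist1 b p = 1" and p': "p' \<in> Dom d n" "dist1 b p' = 1"
  shows "p = p'"
proof -
  obtain k where k: "k < d" "\<not> (1 \<le> b ! k \<and> b ! k \<le> int n)"
    using b by (auto simp: Bd_eq Dom_def)
  have len: "length b = d" "length p = d" "length p' = d"
    using b p p' by (simp_all add: Bd_length Dom_length)
  have off_k: "\<bar>b ! k - r ! k\<bar> = 1 \<and> (r ! k = (if b ! k \<le> 0 then b ! k + 1 else b ! k - 1))"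
    if "r \<in> Dom d n" "dist1 b r = 1" for r
    using that k abs_nth_diff_le_dist1[of k b r] len by (auto simp: Dom_def)
  show ?thesis
  proof (rule nth_equalityI)
    fix i assume "i < length p"
    then show "p ! i = p' ! i"
      using off_k[OF p] off_k[OF p'] nth_eq_if_dist1_eq_1[of b p k i]
        nth_eq_if_dist1_eq_1[of b p' k i] p p' len k(1)
      by (cases "i = k") auto
  qed (simp add: len)
qed

lemma qb_in_Dom_and_nbrs_Bd:
  assumes "b \<in> Bd d n"
  shows "qb d n b \<in> Dom d n" and "nbrs d n b = {qb d n b}"
proof -
  have nbr_Dom: "q \<in> nbrs d n b \<longleftrightarrow> q \<in> Dom d n \<and> dist1 b q = 1" for q
    using assms Dom_Bd_disjoint unfolding nbrs_def edge_def by blast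
  have ex1: "\<exists>!q. q \<in> Dom d n \<and> edge d n b q"
  proof -
    obtain q where "q \<in> Dom d n" "dist1 q b = 1"
      using assms by (auto simp: Bd_def)
    then have "q \<in> nbrs d n b"
      using nbr_Dom assms by (simp add: dist1_sym Dom_length Bd_length)
    then show ?thesis
      using Bd_nbr_unique[OF assms] nbr_Dom unfolding nbrs_def by blast
  qed
  have qb: "qb d n b \<in> Dom d n \<and> edge d n b (qb d n b)"
    unfolding qb_def by (rule theI'[OF ex1])
  then show "qb d n b \<in> Dom d n"
    by simp
  show "nbrs d n b = {qb d n b}"
  proof (intro equalityI subsetI)
    fix q assume "q \<in> nbrs d n b"
    then show "q \<in> {qb d n b}"
      using ex1 qb nbr_Dom by (auto simp: nbrs_def)
  qed (use qb in \<open>simp add: nbrs_def\<close>)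
qed

section \<open>The weighted graph Laplacian\<close>

definition laplacian ::
    "nat \<Rightarrow> nat \<Rightarrow> (int list \<Rightarrow> int list \<Rightarrow> real) \<Rightarrow> (int list \<Rightarrow> real) \<Rightarrow> int list \<Rightarrow> real" where
  "laplacian d n \<gamma> u p = (\<Sum>q\<in>nbrs d n p. \<gamma> p q * (u q - u p))"

lemma kirchhoff_iff_laplacian: "kirchhoff d n \<gamma> u p \<longleftrightarrow> laplacian d n \<gamma> u p = 0"
  by (simp add: kirchhoff_def laplacian_def)

lemma laplacian_add:
  "laplacian d n \<gamma> (\<lambda>q. u q + v q) p = laplacian d n \<gamma> u p + laplacian d n \<gamma> v p"
  unfolding laplacian_def by (simp add: sum.distrib[symmetric] algebra_simps)

lemma laplacian_diff:
  "laplacian d n \<gamma> (\<lambda>q. u q - v q) p = laplacian d n \<gamma> u p - laplacian d n \<gamma> v p"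
  unfolding laplacian_def by (simp add: sum_subtractf[symmetric] algebra_simps)

lemma laplacian_scale: "laplacian d n \<gamma> (\<lambda>q. c * u q) p = c * laplacian d n \<gamma> u p"
  unfolding laplacian_def by (simp add: sum_distrib_left algebra_simps)

lemma laplacian_Bd:
  "b \<in> Bd d n \<Longrightarrow> laplacian d n \<gamma> u b = \<gamma> b (qb d n b) * (u (qb d n b) - u b)"
  by (simp add: laplacian_def qb_in_Dom_and_nbrs_Bd(2))

lemma sum_vvec_eq_laplacian:
  assumes sym: "\<And>p q. edge d n p q \<Longrightarrow> \<gamma> p q = \<gamma> q p"
    and "finite S" and "supp_in S u"
  shows "(\<Sum>r\<in>S. u r * vvec d n \<gamma> r q) = laplacian d n \<gamma> u q"
proof -
  define U where "U = insert q (S \<union> nbrs d n q)"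
  have U: "finite U" "S \<subseteq> U" "nbrs d n q \<subseteq> U" "q \<in> U"
    using \<open>finite S\<close> finite_nbrs by (auto simp: U_def)
  have vvec: "vvec d n \<gamma> r q = (if r \<in> nbrs d n q then \<gamma> q r else 0)
      + (if r = q then - (\<Sum>s\<in>nbrs d n q. \<gamma> q s) else 0)" for r
    using sym[of q r] self_notin_nbrs[of q d n] nbrs_sym[of q d n r]
    by (auto simp: vvec_def nbrs_def)
  have summand: "u r * vvec d n \<gamma> r q = (if r \<in> nbrs d n q then \<gamma> q r * u r else 0)
      + (if r = q then - (u q * (\<Sum>s\<in>nbrs d n q. \<gamma> q s)) else 0)" for r
    by (auto simp: vvec algebra_simps)
  have "(\<Sum>r\<in>S. u r * vvec d n \<gamma> r q) = (\<Sum>r\<in>U. u r * vvec d n \<gamma> r q)"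
    using U \<open>supp_in S u\<close> by (intro sum.mono_neutral_left) (auto simp: supp_in_def)
  also have "\<dots> = (\<Sum>r\<in>U \<inter> nbrs d n q. \<gamma> q r * u r) - u q * (\<Sum>s\<in>nbrs d n q. \<gamma> q s)"
    using U by (simp add: summand sum.distrib sum.inter_restrict)
  also have "\<dots> = laplacian d n \<gamma> u q"
    using U by (simp add: Int_absorb1 laplacian_def sum_subtractf sum_distrib_left algebra_simps)
  finally show ?thesis .
qed

definition laplacian_restr_inj ::
    "nat \<Rightarrow> nat \<Rightarrow> (int list \<Rightarrow> int list \<Rightarrow> real) \<Rightarrow> int list set \<Rightarrow> int list set \<Rightarrow> bool" where
  "laplacian_restr_inj d n \<gamma> S A \<longleftrightarrow>
    (\<forall>u. supp_in S u \<and> (\<forall>q\<in>A. laplacian d n \<gamma> u q = 0) \<longrightarrow> (\<forall>q. u q = 0))"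

lemma unique_continuation_iff_laplacian_restr_inj:
  assumes "J \<subseteq> Bd d n" and "S \<inter> J = {}"
  shows "(\<forall>u. supp_in (S \<union> J) u \<and> (\<forall>p\<in>I. kirchhoff d n \<gamma> u p) \<and> (\<forall>b\<in>J. u b = 0)
      \<and> (\<forall>b\<in>J. \<gamma> b (qb d n b) * (u (qb d n b) - u b) = 0) \<longrightarrow> (\<forall>q. u q = 0))
    \<longleftrightarrow> laplacian_restr_inj d n \<gamma> S (I \<union> J)"
proof -
  have flux: "laplacian d n \<gamma> u b = \<gamma> b (qb d n b) * (u (qb d n b) - u b)" if "b \<in> J" for u b
    using laplacian_Bd assms(1) that by blast
  have "supp_in (S \<union> J) u \<and> (\<forall>p\<in>I. kirchhoff d n \<gamma> u p) \<and> (\<forall>b\<in>J. u b = 0)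
      \<and> (\<forall>b\<in>J. \<gamma> b (qb d n b) * (u (qb d n b) - u b) = 0)
    \<longleftrightarrow> supp_in S u \<and> (\<forall>q\<in>I \<union> J. laplacian d n \<gamma> u q = 0)" for u
    using assms(2) by (auto simp: supp_in_def kirchhoff_iff_laplacian ball_Un flux)
  then show ?thesis
    by (simp add: laplacian_restr_inj_def)
qed

lemma lin_indep_restr_vvec_iff:
  assumes sym: "\<And>p q. edge d n p q \<Longrightarrow> \<gamma> p q = \<gamma> q p" and "finite S"
  shows "lin_indep_restr S (vvec d n \<gamma>) A \<longleftrightarrow> laplacian_restr_inj d n \<gamma> S A"
proof
  assume indep: "lin_indep_restr S (vvec d n \<gamma>) A"
  show "laplacian_restr_inj d n \<gamma> S A"
    unfolding laplacian_restr_inj_def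
  proof (rule allI, rule impI)
    fix u assume u: "supp_in S u \<and> (\<forall>q\<in>A. laplacian d n \<gamma> u q = 0)"
    then have "\<forall>p\<in>S. u p = 0"
      using indep sum_vvec_eq_laplacian[OF sym \<open>finite S\<close>] by (simp add: lin_indep_restr_def)
    with u show "\<forall>q. u q = 0"
      by (auto simp: supp_in_def)
  qed
next
  assume inj: "laplacian_restr_inj d n \<gamma> S A"
  show "lin_indep_restr S (vvec d n \<gamma>) A"
    unfolding lin_indep_restr_def
  proof (intro allI impI)
    fix c assume c: "\<forall>q\<in>A. (\<Sum>p\<in>S. c p * vvec d n \<gamma> p q) = 0"
    define u where "u p = (if p \<in> S then c p else 0)" for p
    have "supp_in S u"
      by (simp add: u_def supp_in_def)
    moreover have "(\<Sum>p\<in>S. c p * vvec d n \<gamma> p q) = laplacian d n \<gamma> u q" for q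
      using sum_vvec_eq_laplacian[OF sym \<open>finite S\<close> \<open>supp_in S u\<close>] by (simp add: u_def)
    ultimately have "\<forall>q. u q = 0"
      using inj c by (simp add: laplacian_restr_inj_def)
    then show "\<forall>p\<in>S. c p = 0"
      unfolding u_def by metis
  qed
qed

section \<open>Maximum principle and the Dirichlet problem\<close>

definition harmonic_ext ::
    "nat \<Rightarrow> nat \<Rightarrow> (int list \<Rightarrow> int list \<Rightarrow> real) \<Rightarrow> int list set \<Rightarrow> (int list \<Rightarrow> real)
      \<Rightarrow> int list \<Rightarrow> real" where
  "harmonic_ext d n \<gamma> I g =
    (THE u. (\<forall>q. q \<notin> I \<longrightarrow> u q = g q) \<and> (\<forall>p\<in>I. kirchhoff d n \<gamma> u p))"

lemma LevS_pred_Un_Lev: "LevS d n (t - 1) \<union> Lev d n t = LevS d n t"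
  by (auto simp: LevS_def Lev_def)

lemma LevS_pred_Lev_disjoint: "LevS d n (t - 1) \<inter> Lev d n t = {}"
  by (auto simp: LevS_def Lev_def)

lemma LevS_subset_Dom: "LevS d n t \<subseteq> Dom d n"
  by (auto simp: LevS_def)

lemma finite_LevS: "finite (LevS d n t)"
  using finite_subset[OF _ finite_Dom_Un_Bd] LevS_subset_Dom by blast

lemma JS_subset_Bd: "JS d n t \<subseteq> Bd d n"
  by (auto simp: JS_def KSminus_def KSplus_def Kminus_def Kplus_def)

lemma LevS_JS_disjoint: "LevS d n t \<inter> JS d n s = {}"
  using LevS_subset_Dom JS_subset_Bd Dom_Bd_disjoint by blast

lemma dirichlet_data_iff:
  assumes S: "S = I \<union> L" and "I \<inter> L = {}" and "S \<inter> J = {}" and x: "supp_in L x"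
  shows "supp_in (S \<union> J) u \<and> (\<forall>q\<in>L. u q = x q) \<and> (\<forall>b\<in>J. u b = 0)
    \<longleftrightarrow> (\<forall>q. q \<notin> I \<longrightarrow> u q = x q)"
proof
  assume u: "supp_in (S \<union> J) u \<and> (\<forall>q\<in>L. u q = x q) \<and> (\<forall>b\<in>J. u b = 0)"
  show "\<forall>q. q \<notin> I \<longrightarrow> u q = x q"
  proof (intro allI impI)
    fix q assume "q \<notin> I"
    show "u q = x q"
    proof (cases "q \<in> L")
      case False
      then have "u q = 0"
        using u \<open>q \<notin> I\<close> S by (cases "q \<in> J") (auto simp: supp_in_def)
      moreover have "x q = 0"
        using x False by (simp add: supp_in_def)
      ultimately show ?thesis
        by simp
    qed (use u in simp)
  qed
next
  assume u: "\<forall>q. q \<notin> I \<longrightarrow> u q = x q"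
  have "q \<notin> I" if "q \<in> J \<or> q \<in> L" for q
    using that assms(2,3) S by blast
  moreover have "q \<notin> L" if "q \<in> J" for q
    using that assms(3) S by blast
  ultimately show "supp_in (S \<union> J) u \<and> (\<forall>q\<in>L. u q = x q) \<and> (\<forall>b\<in>J. u b = 0)"
    using u x S by (auto simp: supp_in_def)
qed

locale positive_conductivity =
  fixes d n :: nat and \<gamma> :: "int list \<Rightarrow> int list \<Rightarrow> real"
  assumes dim_pos: "1 \<le> d"
    and conductivity_pos: "\<And>p q. edge d n p q \<Longrightarrow> 0 < \<gamma> p q"
begin

lemma kirchhoff_at_max:
  assumes "kirchhoff d n \<gamma> w p" and max: "\<And>r. w r \<le> w p" and r: "r \<in> nbrs d n p"
  shows "w r = w p"
proof -
  have terms_nonpos: "\<gamma> p s * (w s - w p) \<le> 0" if "s \<in> nbrs d n p" for s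
    using conductivity_pos[of p s] max[of s] that by (simp add: nbrs_def mult_nonneg_nonpos)
  have "(\<Sum>s\<in>nbrs d n p. - (\<gamma> p s * (w s - w p))) = 0"
    using \<open>kirchhoff d n \<gamma> w p\<close> by (simp add: kirchhoff_def sum_negf)
  then have "\<gamma> p r * (w r - w p) = 0"
    using terms_nonpos r finite_nbrs by (subst (asm) sum_nonneg_eq_0_iff) auto
  then show ?thesis
    using conductivity_pos[of p r] r by (simp add: nbrs_def)
qed

text \<open>Among the points where w attains a positive maximum, one of largest level would
  pass the maximum on to its neighbour one level up, which must then lie in I as well.\<close>

lemma harmonic_nonpos:
  assumes "finite I" and "I \<subseteq> Dom d n" and supp: "supp_in I w"
    and harm: "\<forall>p\<in>I. kirchhoff d n \<gamma> w p"
  shows "w q \<le> 0"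
proof (rule ccontr)
  assume "\<not> w q \<le> 0"
  then have "q \<in> I" "w q > 0"
    using supp by (auto simp: supp_in_def)
  define M where "M = Max (w ` I)"
  have "M \<in> w ` I"
    unfolding M_def using \<open>finite I\<close> \<open>q \<in> I\<close> by (intro Max_in) auto
  have "w q \<le> M"
    unfolding M_def using \<open>finite I\<close> \<open>q \<in> I\<close> by (intro Max_ge) auto
  then have "M > 0"
    using \<open>w q > 0\<close> by simp
  have le_M: "w r \<le> M" for r
    using \<open>finite I\<close> \<open>M > 0\<close> supp by (cases "r \<in> I") (auto simp: M_def supp_in_def)
  define Ms where "Ms = {p \<in> I. w p = M}"
  have "finite (ssum ` Ms)" "ssum ` Ms \<noteq> {}"
    using \<open>finite I\<close> \<open>M \<in> w ` I\<close> by (auto simp: Ms_def)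
  then have "Max (ssum ` Ms) \<in> ssum ` Ms"
    by (rule Max_in)
  then obtain p where p: "p \<in> Ms" "ssum p = Max (ssum ` Ms)"
    by auto
  obtain r where r: "r \<in> nbrs d n p" "ssum r = ssum p + 1"
    using ex_nbr_ssum_Suc[OF dim_pos, of p] p(1) \<open>I \<subseteq> Dom d n\<close> by (auto simp: Ms_def)
  have "w r = M"
    using kirchhoff_at_max[OF _ _ r(1)] harm le_M p(1) by (auto simp: Ms_def)
  then have "r \<in> Ms"
    using \<open>M > 0\<close> supp by (auto simp: Ms_def supp_in_def)
  then have "ssum r \<le> ssum p"
    using p(2) \<open>finite (ssum ` Ms)\<close> by simp
  then show False
    using r(2) by simp
qed

lemma maximum_principle:
  assumes "finite I" and "I \<subseteq> Dom d n" and supp: "supp_in I w"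
    and harm: "\<forall>p\<in>I. kirchhoff d n \<gamma> w p"
  shows "w = (\<lambda>_. 0)"
proof
  fix q
  have "- w q \<le> 0"
  proof (rule harmonic_nonpos[OF assms(1,2)])
    show "supp_in I (\<lambda>q. - w q)"
      using supp by (simp add: supp_in_def)
    show "\<forall>p\<in>I. kirchhoff d n \<gamma> (\<lambda>q. - w q) p"
      using harm laplacian_scale[of d n \<gamma> "- 1" w] by (simp add: kirchhoff_iff_laplacian)
  qed
  moreover have "w q \<le> 0"
    using harmonic_nonpos[OF assms] .
  ultimately show "w q = 0"
    by simp
qed

lemma dirichlet_unique:
  assumes "finite I" and "I \<subseteq> Dom d n"
    and "\<forall>q. q \<notin> I \<longrightarrow> u q = v q"
    and "\<forall>p\<in>I. kirchhoff d n \<gamma> u p" and "\<forall>p\<in>I. kirchhoff d n \<gamma> v p"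
  shows "u = v"
proof -
  have "(\<lambda>q. u q - v q) = (\<lambda>_. 0)"
    using assms(3-5)
    by (intro maximum_principle[OF assms(1,2)]) (auto simp: supp_in_def kirchhoff_iff_laplacian laplacian_diff)
  then show ?thesis
    by (simp add: fun_eq_iff)
qed

text \<open>Existence follows from uniqueness: by the maximum principle the Laplacian is injective
  on functions supported in the finite set I, hence onto.\<close>

lemma dirichlet_exists:
  fixes g :: "int list \<Rightarrow> real"
  assumes "finite I" and "I \<subseteq> Dom d n"
  shows "\<exists>u. (\<forall>q. q \<notin> I \<longrightarrow> u q = g q) \<and> (\<forall>p\<in>I. kirchhoff d n \<gamma> u p)"
proof -
  define F where "F w p = (if p \<in> I then laplacian d n \<gamma> w p else 0)" for w p
  have "\<exists>w. supp_in I w \<and> F w = (\<lambda>p. if p \<in> I then - laplacian d n \<gamma> g p else 0)"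
  proof (rule inj_on_finite_support_imp_surj[OF \<open>finite I\<close>])
    show "F (a + b) = F a + F b" for a b
      by (simp add: F_def fun_eq_iff plus_fun_def laplacian_add)
    show "F (\<lambda>x. c * a x) = (\<lambda>x. c * F a x)" for c a
      by (simp add: F_def fun_eq_iff laplacian_scale)
    show "supp_in I (F w)" for w
      by (simp add: F_def supp_in_def)
    show "supp_in I (\<lambda>p. if p \<in> I then - laplacian d n \<gamma> g p else 0)"
      by (simp add: supp_in_def)
    fix w assume w: "supp_in I w" "F w = 0"
    have "kirchhoff d n \<gamma> w p" if "p \<in> I" for p
      using fun_cong[OF w(2), of p] that by (simp add: F_def kirchhoff_iff_laplacian)
    then show "w = 0"
      using maximum_principle[OF assms w(1)] by (simp add: zero_fun_def)
  qed
  then obtain w where w: "supp_in I w" "F w = (\<lambda>p. if p \<in> I then - laplacian d n \<gamma> g p else 0)"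
    by blast
  have "kirchhoff d n \<gamma> (\<lambda>q. w q + g q) p" if "p \<in> I" for p
    using fun_cong[OF w(2), of p] that by (simp add: F_def kirchhoff_iff_laplacian laplacian_add)
  moreover have "w q + g q = g q" if "q \<notin> I" for q
    using w(1) that by (simp add: supp_in_def)
  ultimately show ?thesis
    by (intro exI[of _ "\<lambda>q. w q + g q"]) simp
qed

lemma eq_harmonic_ext_iff:
  assumes "finite I" and "I \<subseteq> Dom d n"
  shows "u = harmonic_ext d n \<gamma> I g \<longleftrightarrow>
    (\<forall>q. q \<notin> I \<longrightarrow> u q = g q) \<and> (\<forall>p\<in>I. kirchhoff d n \<gamma> u p)"
proof -
  let ?P = "\<lambda>u. (\<forall>q. q \<notin> I \<longrightarrow> u q = g q) \<and> (\<forall>p\<in>I. kirchhoff d n \<gamma> u p)"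
  obtain v where v: "?P v"
    using dirichlet_exists[OF assms] by blast
  have unique: "u = v" if "?P u" for u
    using that v by (intro dirichlet_unique[OF assms]) auto
  have ext: "harmonic_ext d n \<gamma> I g = v"
    unfolding harmonic_ext_def using v unique by (rule the_equality)
  show ?thesis
  proof
    assume "u = harmonic_ext d n \<gamma> I g"
    then show "?P u"
      using v ext by simp
  next
    assume "?P u"
    then show "u = harmonic_ext d n \<gamma> I g"
      using unique ext by simp
  qed
qed

lemma T2'_eq_laplacian_harmonic_ext:
  assumes "supp_in (Lev d n t) x"
  shows "T2' d n \<gamma> t x = (\<lambda>b. if b \<in> JS d n (t - 1)
    then laplacian d n \<gamma> (harmonic_ext d n \<gamma> (LevS d n (t - 1)) x) b else 0)"
proof -
  let ?I = "LevS d n (t - 1)" and ?J = "JS d n (t - 1)"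
  have solution_iff: "supp_in (LevS d n t \<union> ?J) u \<and> (\<forall>q\<in>Lev d n t. u q = x q)
      \<and> (\<forall>b\<in>?J. u b = 0) \<and> (\<forall>p\<in>?I. kirchhoff d n \<gamma> u p) \<longleftrightarrow> u = harmonic_ext d n \<gamma> ?I x"
    for u
    using dirichlet_data_iff[OF LevS_pred_Un_Lev[of d n t, symmetric] LevS_pred_Lev_disjoint
        LevS_JS_disjoint[of d n t "t - 1"] assms, of u]
      eq_harmonic_ext_iff[OF finite_LevS[of d n "t - 1"] LevS_subset_Dom, of u x]
    by blast
  \<comment> \<open>T2'_def stores its predicate eta-contracted, so the THE is rewritten by unification
    with the_equality rather than by the simplifier.\<close>
  show ?thesis
    unfolding T2'_def
    by (subst the_equality[where a = "harmonic_ext d n \<gamma> ?I x"];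
        (rule solution_iff[THEN iffD2, OF refl] | erule solution_iff[THEN iffD1]
          | simp add: Let_def fun_eq_iff laplacian_Bd JS_subset_Bd[of d n "t - 1", THEN subsetD]))
qed

lemma laplacian_restr_inj_if_inj_on_T2':
  assumes inj: "inj_on (T2' d n \<gamma> t) {x. supp_in (Lev d n t) x}"
  shows "laplacian_restr_inj d n \<gamma> (LevS d n t) (LevS d n (t - 1) \<union> JS d n (t - 1))"
  unfolding laplacian_restr_inj_def
proof (rule allI, rule impI)
  let ?I = "LevS d n (t - 1)" and ?L = "Lev d n t" and ?J = "JS d n (t - 1)"
  let ?E = "harmonic_ext d n \<gamma> ?I"
  fix u assume u: "supp_in (LevS d n t) u \<and> (\<forall>q\<in>?I \<union> ?J. laplacian d n \<gamma> u q = 0)"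
  define x where "x q = (if q \<in> ?I then 0 else u q)" for q
  have "supp_in ?L x"
    using u LevS_pred_Un_Lev[of d n t] LevS_pred_Lev_disjoint[of d n t]
    by (auto simp: x_def supp_in_def)
  have E_iff: "v = ?E g \<longleftrightarrow> (\<forall>q. q \<notin> ?I \<longrightarrow> v q = g q) \<and> (\<forall>p\<in>?I. kirchhoff d n \<gamma> v p)"
    for v g
    by (rule eq_harmonic_ext_iff[OF finite_LevS LevS_subset_Dom])
  have "u = ?E x" and zero: "(\<lambda>_. 0) = ?E (\<lambda>_. 0)"
    using u by (auto simp: E_iff x_def kirchhoff_iff_laplacian laplacian_def)
  then have "T2' d n \<gamma> t x = T2' d n \<gamma> t (\<lambda>_. 0)"
    using u T2'_eq_laplacian_harmonic_ext \<open>supp_in ?L x\<close> by (auto simp: supp_in_def laplacian_def)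
  then have "x = (\<lambda>_. 0)"
    using inj \<open>supp_in ?L x\<close> by (auto simp: inj_on_def supp_in_def)
  then show "\<forall>q. u q = 0"
    using \<open>u = ?E x\<close> zero by metis
qed

lemma inj_on_T2'_if_laplacian_restr_inj:
  assumes K: "laplacian_restr_inj d n \<gamma> (LevS d n t) (LevS d n (t - 1) \<union> JS d n (t - 1))"
  shows "inj_on (T2' d n \<gamma> t) {x. supp_in (Lev d n t) x}"
proof (rule inj_onI, simp only: mem_Collect_eq)
  let ?I = "LevS d n (t - 1)" and ?L = "Lev d n t" and ?J = "JS d n (t - 1)"
  let ?E = "harmonic_ext d n \<gamma> ?I"
  fix x y assume x: "supp_in ?L x" and y: "supp_in ?L y"
    and eq: "T2' d n \<gamma> t x = T2' d n \<gamma> t y"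
  have Ex: "\<forall>q. q \<notin> ?I \<longrightarrow> ?E x q = x q" "\<forall>p\<in>?I. kirchhoff d n \<gamma> (?E x) p"
    and Ey: "\<forall>q. q \<notin> ?I \<longrightarrow> ?E y q = y q" "\<forall>p\<in>?I. kirchhoff d n \<gamma> (?E y) p"
    using eq_harmonic_ext_iff[OF finite_LevS LevS_subset_Dom] by blast+
  let ?w = "\<lambda>q. ?E x q - ?E y q"
  have "laplacian d n \<gamma> (?E x) b = laplacian d n \<gamma> (?E y) b" if "b \<in> ?J" for b
    using fun_cong[OF eq, of b] T2'_eq_laplacian_harmonic_ext[OF x] T2'_eq_laplacian_harmonic_ext[OF y]
      that
    by simp
  then have "\<forall>q\<in>?I \<union> ?J. laplacian d n \<gamma> ?w q = 0"
    using Ex(2) Ey(2) by (auto simp: laplacian_diff kirchhoff_iff_laplacian)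
  moreover have "supp_in (LevS d n t) ?w"
    using Ex(1) Ey(1) x y LevS_pred_Un_Lev[of d n t, symmetric] by (auto simp: supp_in_def)
  ultimately have w: "?E x q - ?E y q = 0" for q
    using K[unfolded laplacian_restr_inj_def, rule_format, of ?w q] by blast
  show "x = y"
  proof
    fix q
    show "x q = y q"
    proof (cases "q \<in> ?I")
      case True
      then have "q \<notin> ?L"
        using LevS_pred_Lev_disjoint[of d n t] by blast
      then show ?thesis
        using x y by (simp add: supp_in_def)
    next
      case False
      then show ?thesis
        using w[of q] Ex(1) Ey(1) by simp
    qed
  qed
qed

end

theorem lemma3p2:
  fixes d n :: nat and t :: int and \<gamma> :: "int list \<Rightarrow> int list \<Rightarrow> real"
  assumes "d \<ge> 2" and "n \<ge> 1" and "int d \<le> t" and "t \<le> int d * int n"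
    and "\<And>p q. edge d n p q \<Longrightarrow> \<gamma> p q > 0 \<and> \<gamma> p q = \<gamma> q p"
  shows "((\<forall>u. supp_in (LevS d n t \<union> JS d n (t - 1)) u
             \<and> (\<forall>p\<in>LevS d n (t - 1). kirchhoff d n \<gamma> u p)
             \<and> (\<forall>b\<in>JS d n (t - 1). u b = 0)
             \<and> (\<forall>b\<in>JS d n (t - 1). \<gamma> b (qb d n b) * (u (qb d n b) - u b) = 0)
             \<longrightarrow> (\<forall>q. u q = 0))
       \<longleftrightarrow> lin_indep_restr (LevS d n t) (vvec d n \<gamma>) (LevS d n (t - 1) \<union> JS d n (t - 1)))
     \<and> (lin_indep_restr (LevS d n t) (vvec d n \<gamma>) (LevS d n (t - 1) \<union> JS d n (t - 1))
       \<longleftrightarrow> inj_on (T2' d n \<gamma> t) {x. supp_in (Lev d n t) x})"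
proof -
  interpret positive_conductivity d n \<gamma>
    using assms(1,5) by unfold_locales auto
  have sym: "\<And>p q. edge d n p q \<Longrightarrow> \<gamma> p q = \<gamma> q p"
    using assms(5) by blast
  have "inj_on (T2' d n \<gamma> t) {x. supp_in (Lev d n t) x}
      \<longleftrightarrow> laplacian_restr_inj d n \<gamma> (LevS d n t) (LevS d n (t - 1) \<union> JS d n (t - 1))"
    using laplacian_restr_inj_if_inj_on_T2' inj_on_T2'_if_laplacian_restr_inj by blast
  then show ?thesis
    using unique_continuation_iff_laplacian_restr_inj[OF JS_subset_Bd LevS_JS_disjoint]
      lin_indep_restr_vvec_iff[OF sym finite_LevS]
    by simp
qed

end
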